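(* Let $V$ be a finite-dimensional real vector space, regarded as an additive group, and let $S,T\subset V$. If the asymptotic cones satisfy $S\infty\cap T\infty=\{0\}$, then $S\pitchfork T$ in $V$.
   Context: The asymptotic cone $S\infty$ of a subset $S\subset V$ is the closed cone consisting of all limits $\lim_{n\to\infty}\varepsilon_n x_n$ with $x_n\in S$ and $\varepsilon_n>0$, $\varepsilon_n\to 0$. For subsets $S,T$ of the additive group $V$, $S\pitchfork T$ means that for every compact subset $C\subset V$ the set $S\cap (C+T+C)$ is relatively compact, where $C+T+C=\{a+x+b:a,b\in C,\ x\in T\}$. *)

theory Defs
  imports "HOL-Analysis.Analysis"
begin

definition asymptotic_cone :: "'a::real_normed_vector set \<Rightarrow> 'a set" where
  "asymptotic_cone S = {v. \<exists>x eps. (\<forall>n. x n \<in> S) \<and> (\<forall>n. eps n > (0::real)) \<and>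
       eps \<longlonglongrightarrow> 0 \<and> (\<lambda>n. eps n *\<^sub>R x n) \<longlonglongrightarrow> v}"

definition pitchfork :: "'a::{ab_group_add,topological_space} set \<Rightarrow> 'a set \<Rightarrow> bool" where
  "pitchfork S T \<longleftrightarrow> (\<forall>C. compact C \<longrightarrow>
      compact (closure (S \<inter> {a + x + b | a x b. a \<in> C \<and> x \<in> T \<and> b \<in> C})))"

end

theory Submission
  imports Defs
begin

text \<open>If \<open>S \<inter> (C + T + C)\<close> were unbounded for some compact \<open>C\<close>, normalising an escaping
  sequence in it would, by compactness of the unit sphere, produce a unit vector in its
  asymptotic cone. That cone lies in \<open>S\<infinity>\<close>, and also in \<open>T\<infinity>\<close>, because translating \<open>T\<close> by the
  bounded set \<open>C + C\<close> does not change its asymptotic directions.\<close>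

lemma asymptotic_coneI:
  assumes "\<And>n. x n \<in> S" and "\<And>n. eps n > 0" and "eps \<longlonglongrightarrow> 0"
    and "(\<lambda>n. eps n *\<^sub>R x n) \<longlonglongrightarrow> v"
  shows "v \<in> asymptotic_cone S"
  unfolding asymptotic_cone_def using assms by blast

lemma asymptotic_cone_mono: "S \<subseteq> T \<Longrightarrow> asymptotic_cone S \<subseteq> asymptotic_cone T"
  unfolding asymptotic_cone_def by blast

lemma asymptotic_cone_bounded_translates_subset:
  fixes T K :: "'a::real_normed_vector set"
  assumes "bounded K"
  shows "asymptotic_cone {x + k | x k. x \<in> T \<and> k \<in> K} \<subseteq> asymptotic_cone T"
proof
  fix v
  assume "v \<in> asymptotic_cone {x + k | x k. x \<in> T \<and> k \<in> K}"
  then obtain y eps where y: "\<And>n. y n \<in> {x + k | x k. x \<in> T \<and> k \<in> K}"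
    and eps_pos: "\<And>n. eps n > 0" and eps_0: "eps \<longlonglongrightarrow> 0"
    and lim_y: "(\<lambda>n. eps n *\<^sub>R y n) \<longlonglongrightarrow> v"
    unfolding asymptotic_cone_def by blast
  have "\<forall>n. \<exists>x k. x \<in> T \<and> k \<in> K \<and> y n = x + k"
    using y by blast
  then obtain x k where x: "\<And>n. x n \<in> T" and k: "\<And>n. k n \<in> K" and y_eq: "\<And>n. y n = x n + k n"
    by metis
  obtain B where B: "\<And>u. u \<in> K \<Longrightarrow> norm u \<le> B"
    using \<open>bounded K\<close> bounded_iff by metis
  have "(\<lambda>n. eps n *\<^sub>R k n) \<longlonglongrightarrow> 0"
  proof (rule Lim_null_comparison)
    show "\<forall>\<^sub>F n in sequentially. norm (eps n *\<^sub>R k n) \<le> eps n * B"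
      using B[OF k] eps_pos by (simp add: less_imp_le mult_left_mono)
    show "(\<lambda>n. eps n * B) \<longlonglongrightarrow> 0"
      using tendsto_mult_left_zero[OF eps_0] by simp
  qed
  from tendsto_diff[OF lim_y this]
  have "(\<lambda>n. eps n *\<^sub>R x n) \<longlonglongrightarrow> v"
    by (simp add: y_eq scaleR_add_right)
  then show "v \<in> asymptotic_cone T"
    by (rule asymptotic_coneI[OF x eps_pos eps_0])
qed

lemma unbounded_imp_unit_vector_in_asymptotic_cone:
  fixes S :: "'a::{real_normed_vector,perfect_space,heine_borel} set"
  assumes "\<not> bounded S"
  obtains l where "l \<in> asymptotic_cone S" and "norm l = 1"
proof -
  have "\<forall>n. \<exists>x\<in>S. real (Suc n) < norm x"
    using assms unfolding bounded_iff by (meson not_le)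
  then obtain x where x: "\<And>n. x n \<in> S" and x_large: "\<And>n. real (Suc n) < norm (x n)"
    by metis
  define eps where "eps n = inverse (norm (x n))" for n
  have x_nonzero: "x n \<noteq> 0" for n
    using x_large[of n] by auto
  have eps_pos: "eps n > 0" for n
    using x_nonzero by (simp add: eps_def)
  have "real n \<le> norm (x n)" for n
    using x_large[of n] by simp
  then have "filterlim (\<lambda>n. norm (x n)) at_top sequentially"
    by (intro filterlim_at_top_mono[OF filterlim_real_sequentially] always_eventually) blast
  then have eps_0: "eps \<longlonglongrightarrow> 0"
    unfolding eps_def by (rule tendsto_inverse_0_at_top)
  define u where "u n = eps n *\<^sub>R x n" for n
  have "u n \<in> sphere 0 1" for n
    using x_nonzero by (simp add: u_def eps_def)
  then obtain l r where l: "l \<in> sphere 0 1" and r: "strict_mono r" and lim: "(u \<circ> r) \<longlonglongrightarrow> l"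
    using compact_sphere[of "0::'a" 1] unfolding compact_eq_seq_compact_metric seq_compact_def
    by metis
  have "l \<in> asymptotic_cone S"
  proof (rule asymptotic_coneI)
    show "(\<lambda>n. (eps \<circ> r) n *\<^sub>R (x \<circ> r) n) \<longlonglongrightarrow> l"
      using lim by (simp add: u_def comp_def)
  qed (use x eps_pos LIMSEQ_subseq_LIMSEQ[OF eps_0 r] in \<open>auto simp: comp_def\<close>)
  with l that show thesis by simp
qed

theorem lemma7p3:
  fixes S T :: "'a::euclidean_space set"
  assumes "asymptotic_cone S \<inter> asymptotic_cone T = {0}"
  shows "pitchfork S T"
  unfolding pitchfork_def
proof (intro allI impI)
  fix C :: "'a set"
  assume "compact C"
  define K where "K = {a + b | a b. a \<in> C \<and> b \<in> C}"
  have "bounded K"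
    unfolding K_def using compact_sums[OF \<open>compact C\<close> \<open>compact C\<close>] by (rule compact_imp_bounded)
  define A where "A = S \<inter> {a + x + b | a x b. a \<in> C \<and> x \<in> T \<and> b \<in> C}"
  have A_translates: "A \<subseteq> {x + k | x k. x \<in> T \<and> k \<in> K}"
  proof
    fix z
    assume "z \<in> A"
    then obtain a x b where "z = a + x + b" "a \<in> C" "x \<in> T" "b \<in> C"
      unfolding A_def by blast
    moreover have "a + x + b = x + (a + b)"
      by (simp add: add_ac)
    ultimately show "z \<in> {x + k | x k. x \<in> T \<and> k \<in> K}"
      unfolding K_def by blast
  qed
  have "bounded A"
  proof (rule ccontr)
    assume "\<not> bounded A"
    then obtain l where l: "l \<in> asymptotic_cone A" "norm l = 1"
      by (rule unbounded_imp_unit_vector_in_asymptotic_cone)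
    have "A \<subseteq> S"
      unfolding A_def by blast
    then have "l \<in> asymptotic_cone S"
      using l(1) asymptotic_cone_mono by blast
    moreover have "l \<in> asymptotic_cone T"
      using l(1) asymptotic_cone_mono[OF A_translates]
        asymptotic_cone_bounded_translates_subset[OF \<open>bounded K\<close>] by blast
    ultimately have "l = 0"
      using assms by blast
    with l(2) show False
      by simp
  qed
  then show "compact (closure A)"
    by simp
qed

end
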